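(* Let $\mathcal{A}=\mathbb{C}[x_{1},x_{2},x_{3}]$, $P=x_{1}x_{2}x_{3}$, let $n_{1},n_{2},n_{3}$ be positive integers and $\alpha_{1},\alpha_{2},\alpha_{3}\in\mathbb{C}$ such that $$h=\alpha_{1}P^{n_{1}}+\alpha_{2}P^{n_{2}}+\alpha_{3}P^{n_{3}}$$ is reduced, and let $D=\{h=0\}$. Put $a_{i}=\alpha_{i}P^{n_{i}-1}$ and $$\delta^{1}=x_{1}\partial_{x_{1}}-x_{2}\partial_{x_{2}},\quad \delta^{2}=x_{2}\partial_{x_{2}}-x_{3}\partial_{x_{3}},\quad \delta^{3}=a_{1}x_{1}\partial_{x_{1}}+a_{2}x_{2}\partial_{x_{2}}+a_{3}x_{3}\partial_{x_{3}}.$$ Then $\delta^{1},\delta^{2},\delta^{3}$ form a free Saito basis of $Der_{\mathcal{A}}(\log D)$: each $\delta^{i}$ satisfies $\delta^{i}(h)\in h\mathcal{A}$, the determinant of the coefficient matrix $$\begin{pmatrix} x_{1}&0&a_{1}x_{1}\\ -x_{2}&x_{2}&a_{2}x_{2}\\ 0&-x_{3}&a_{3}x_{3}\end{pmatrix}$$ equals $h$, and $\{\delta^{1},\delta^{2},\delta^{3}\}$ is a free $\mathcal{A}$-basis of $Der_{\mathcal{A}}(\log D)$.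
   Context: $Der_{\mathcal{A}}(\log D)=\{\delta\in Der_{\mathcal{A}}:\delta(h)\in h\mathcal{A}\}$ is the module of logarithmic vector fields along $D$. *)

theory Defs
  imports "HOL-Computational_Algebra.Polynomial" "HOL-Computational_Algebra.Squarefree"
begin

text \<open>The polynomial ring A = C[x1,x2,x3], realised as iterated univariate polynomials:
  the innermost variable is x1, the middle one x2, the outermost one x3.\<close>
type_synonym A = "complex poly poly poly"

definition X1 :: A where "X1 = [:[:[:0, 1:]:]:]"
definition X2 :: A where "X2 = [:[:0, 1:]:]"
definition X3 :: A where "X3 = [:0, 1:]"
definition cst :: "complex \<Rightarrow> A" where "cst c = [:[:[:c:]:]:]"

definition d1 :: "A \<Rightarrow> A" where "d1 f = map_poly (map_poly pderiv) f"
definition d2 :: "A \<Rightarrow> A" where "d2 f = map_poly pderiv f"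
definition d3 :: "A \<Rightarrow> A" where "d3 f = pderiv f"

text \<open>A derivation of A (vector field) c1 d1 + c2 d2 + c3 d3 is given by its coefficient triple.\<close>
type_synonym vf = "A \<times> A \<times> A"

definition vf_apply :: "vf \<Rightarrow> A \<Rightarrow> A" where
  "vf_apply \<delta> f = (case \<delta> of (c1, c2, c3) \<Rightarrow> c1 * d1 f + c2 * d2 f + c3 * d3 f)"

definition logder :: "A \<Rightarrow> vf set" where
  "logder h = {\<delta>. h dvd vf_apply \<delta> h}"

definition vf_comb :: "A \<Rightarrow> vf \<Rightarrow> A \<Rightarrow> vf \<Rightarrow> A \<Rightarrow> vf \<Rightarrow> vf" where
  "vf_comb f u g v k w =
     (case u of (u1, u2, u3) \<Rightarrow> case v of (v1, v2, v3) \<Rightarrow> case w of (w1, w2, w3) \<Rightarrow>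
       (f * u1 + g * v1 + k * w1, f * u2 + g * v2 + k * w2, f * u3 + g * v3 + k * w3))"

definition free_basis3 :: "vf set \<Rightarrow> vf \<Rightarrow> vf \<Rightarrow> vf \<Rightarrow> bool" where
  "free_basis3 M u v w \<longleftrightarrow> u \<in> M \<and> v \<in> M \<and> w \<in> M \<and>
     (\<forall>\<delta>\<in>M. \<exists>!(f, g, k). \<delta> = vf_comb f u g v k w)"

definition det3 :: "vf \<Rightarrow> vf \<Rightarrow> vf \<Rightarrow> A" where
  "det3 u v w = (case u of (u1, u2, u3) \<Rightarrow> case v of (v1, v2, v3) \<Rightarrow> case w of (w1, w2, w3) \<Rightarrow>
     u1 * (v2 * w3 - w2 * v3) - v1 * (u2 * w3 - w2 * u3) + w1 * (u2 * v3 - v2 * u3))"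

end

(* Write h = H(P) with H = alpha1 t^n1 + alpha2 t^n2 + alpha3 t^n3 in C[t]. By the chain rule
   delta(h) = H'(P) delta(P) for every vector field delta. As h is reduced, H has no repeated root,
   so H and H' are coprime, and hence so are h and H'(P): delta is logarithmic iff h divides
   delta(P) = c1 x2 x3 + c2 x1 x3 + c3 x1 x2. Each x_i is prime and divides h, so c_i = x_i e_i;
   with h = P g, g = a1 + a2 + a3, the condition becomes g | e1 + e2 + e3, which exhibits delta
   explicitly as a combination of delta1, delta2, delta3. The coefficients are unique by Cramer's
   rule, the determinant being h, which is nonzero. *)

theory Submission
  imports Defs "HOL-Computational_Algebra.Polynomial_Factorial"
    "HOL-Computational_Algebra.Fundamental_Theorem_Algebra" "HOL-Computational_Algebra.Field_as_Ring"
begin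

lemma map_poly_add:
  assumes "f 0 = 0" "\<And>a b. f (a + b) = f a + f b"
  shows "map_poly f (p + q) = map_poly f p + map_poly f q"
  by (rule poly_eqI) (simp add: coeff_map_poly assms)

lemma map_poly_mult:
  assumes "f 0 = 0" "\<And>a b. f (a + b) = f a + f b" "\<And>a b. f (a * b) = f a * f b"
  shows "map_poly f (p * q) = map_poly f p * map_poly f q"
proof (induction p)
  case (pCons a p)
  then show ?case by (simp add: map_poly_add map_poly_pCons map_poly_smult assms)
qed simp

lemma pCons_0_1_dvd_const_poly_iff: "[:0, 1:] dvd [:c:] \<longleftrightarrow> c = (0::'a::idom)"
  using dvd_imp_degree_le[of "[:0, 1:]" "[:c:]"] by auto

lemma const_poly_dvd_pCons_0_1_iff: "[:c:] dvd [:0, 1:] \<longleftrightarrow> c dvd (1::'a::idom)"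
  using const_poly_dvd_iff[of c "[:0, 1:]"] by (auto simp: coeff_pCons split: nat.splits)

lemma coprime_pderiv_if_rsquarefree:
  fixes p :: "'a::{alg_closed_field, field_char_0} poly"
  assumes "rsquarefree p"
  shows "coprime p (pderiv p)"
proof (rule coprimeI)
  fix d
  assume d: "d dvd p" "d dvd pderiv p"
  have "degree d = 0"
  proof (rule ccontr)
    assume "degree d \<noteq> 0"
    then obtain z where "poly d z = 0"
      using alg_closed_imp_poly_has_root by blast
    with d have "poly p z = 0" "poly (pderiv p) z = 0"
      by (auto elim!: dvdE)
    with assms show False
      by (auto simp: rsquarefree_roots)
  qed
  moreover have "d \<noteq> 0"
    using d assms by (auto simp: rsquarefree_def)
  ultimately show "is_unit d"
    by (simp add: is_unit_iff_degree)
qed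

definition derivation :: "('a::comm_ring_1 \<Rightarrow> 'a) \<Rightarrow> bool" where
  "derivation D \<longleftrightarrow> (\<forall>a b. D (a + b) = D a + D b) \<and> (\<forall>a b. D (a * b) = a * D b + D a * b)"

lemma derivation_add: "derivation D \<Longrightarrow> D (a + b) = D a + D b"
  by (simp add: derivation_def)

lemma derivation_mult: "derivation D \<Longrightarrow> D (a * b) = a * D b + D a * b"
  by (simp add: derivation_def)

lemma derivation_0: "derivation D \<Longrightarrow> D 0 = 0"
  using derivation_add[of D 0 0] by simp

lemma derivation_pderiv: "derivation pderiv"
  by (simp add: derivation_def pderiv_add pderiv_mult mult.commute)

lemma derivation_map_poly:
  assumes "derivation D"
  shows "derivation (map_poly D)"
proof -
  have D0: "D 0 = 0" and D_add: "\<And>a b. D (a + b) = D a + D b"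
    using assms by (simp_all add: derivation_0 derivation_add)
  have smult: "map_poly D (smult a q) = smult a (map_poly D q) + smult (D a) q" for a q
    by (rule poly_eqI) (simp add: coeff_map_poly D0 derivation_mult[OF assms])
  have "map_poly D (p * q) = p * map_poly D q + map_poly D p * q" for p q
  proof (induction p)
    case (pCons a p)
    then show ?case by (simp add: map_poly_add D0 D_add smult map_poly_pCons algebra_simps)
  qed simp
  then show ?thesis by (simp add: derivation_def map_poly_add D0 D_add)
qed

lemma derivation_partials: "derivation d1" "derivation d2" "derivation d3"
  unfolding d1_def[abs_def] d2_def[abs_def] d3_def[abs_def]
  by (intro derivation_map_poly derivation_pderiv)+

lemma partials_X [simp]:
  "d1 X1 = 1" "d1 X2 = 0" "d1 X3 = 0"
  "d2 X1 = 0" "d2 X2 = 1" "d2 X3 = 0"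
  "d3 X1 = 0" "d3 X2 = 0" "d3 X3 = 1"
  unfolding d1_def d2_def d3_def X1_def X2_def X3_def
  by (simp_all add: map_poly_pCons pderiv_pCons one_pCons[symmetric] map_poly_1)

lemma partials_cst [simp]: "d1 (cst c) = 0" "d2 (cst c) = 0" "d3 (cst c) = 0"
  unfolding d1_def d2_def d3_def cst_def by (simp_all add: map_poly_pCons)

lemma derivation_vf_apply: "derivation (vf_apply \<delta>)"
  using derivation_partials unfolding derivation_def vf_apply_def
  by (auto simp: algebra_simps split: prod.splits)

lemma vf_apply_cst [simp]: "vf_apply \<delta> (cst c) = 0"
  by (simp add: vf_apply_def split: prod.splits)

lemma vf_apply_X1_X2_X3:
  "vf_apply (c1, c2, c3) (X1 * X2 * X3) = c1 * X2 * X3 + c2 * X1 * X3 + c3 * X1 * X2"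
  using derivation_partials by (simp add: vf_apply_def derivation_mult algebra_simps)

lemma cst_0 [simp]: "cst 0 = 0"
  and cst_1 [simp]: "cst 1 = 1"
  and cst_add [simp]: "cst (a + b) = cst a + cst b"
  and cst_mult [simp]: "cst (a * b) = cst a * cst b"
  and cst_of_nat [simp]: "cst (of_nat n) = of_nat n"
  unfolding cst_def by (simp_all add: one_pCons of_nat_poly)

definition poly_subst :: "A \<Rightarrow> complex poly \<Rightarrow> A" where
  "poly_subst x p = poly (map_poly cst p) x"

lemma poly_subst_0 [simp]: "poly_subst x 0 = 0"
  and poly_subst_1 [simp]: "poly_subst x 1 = 1"
  and poly_subst_pCons: "poly_subst x (pCons a p) = cst a + x * poly_subst x p"
  and poly_subst_add [simp]: "poly_subst x (p + q) = poly_subst x p + poly_subst x q"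
  and poly_subst_mult [simp]: "poly_subst x (p * q) = poly_subst x p * poly_subst x q"
  and poly_subst_monom [simp]: "poly_subst x (monom c n) = cst c * x ^ n"
  unfolding poly_subst_def
  by (simp_all add: map_poly_pCons map_poly_add map_poly_mult map_poly_monom poly_monom)

lemma poly_subst_dvd: "p dvd q \<Longrightarrow> poly_subst x p dvd poly_subst x q"
  by (elim dvdE) simp

lemma derivation_poly_subst:
  assumes "derivation D" "\<And>c. D (cst c) = 0"
  shows "D (poly_subst x p) = poly_subst x (pderiv p) * D x"
proof (induction p)
  case (pCons a p)
  then show ?case
    using assms by (simp add: poly_subst_pCons pderiv_pCons derivation_add derivation_mult algebra_simps)
qed (simp add: derivation_0 assms)

lemma coprime_poly_subst:
  assumes "coprime p q"
  shows "coprime (poly_subst x p) (poly_subst x q)"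
proof -
  obtain u v where "u * p + v * q = 1"
    using bezout_coefficients_fst_snd[of p q] assms by (auto simp: coprime_iff_gcd_eq_1)
  then have "poly_subst x u * poly_subst x p + poly_subst x v * poly_subst x q = 1"
    by (metis poly_subst_1 poly_subst_add poly_subst_mult)
  then show ?thesis
    by (metis coprimeI dvd_add dvd_mult)
qed

lemma rsquarefree_if_squarefree_poly_subst:
  assumes "squarefree (poly_subst x p)" "degree x \<noteq> 0"
  shows "rsquarefree p"
  unfolding rsquarefree_def
proof (intro conjI allI)
  show "p \<noteq> 0"
    using assms(1) by auto
  fix a
  have "\<not> is_unit (poly_subst x [:-a, 1:])"
  proof -
    have "degree (cst (- a)) < degree x"
      using assms(2) by (simp add: cst_def)
    then have "degree (poly_subst x [:-a, 1:]) \<noteq> 0"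
      using assms(2) by (simp add: poly_subst_pCons degree_add_eq_right)
    then show ?thesis
      by (auto simp: is_unit_poly_iff)
  qed
  moreover have "poly_subst x [:-a, 1:] ^ 2 dvd poly_subst x p" if "[:-a, 1:] ^ 2 dvd p"
    using poly_subst_dvd[OF that] by (metis poly_subst_mult power2_eq_square)
  ultimately have "\<not> [:-a, 1:] ^ 2 dvd p"
    using assms(1) squarefreeD by blast
  then show "order a p = 0 \<or> order a p = 1"
    using \<open>p \<noteq> 0\<close> by (auto simp: order_divides)
qed

lemma logder_poly_subst_iff:
  assumes "coprime (poly_subst x H) (poly_subst x (pderiv H))"
  shows "\<delta> \<in> logder (poly_subst x H) \<longleftrightarrow> poly_subst x H dvd vf_apply \<delta> x"
  using assms by (simp add: logder_def derivation_poly_subst derivation_vf_apply coprime_dvd_mult_right_iff)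

lemma det3_vf_comb:
  fixes f g k :: A and u v w :: vf
  shows "det3 (vf_comb f u g v k w) v w = f * det3 u v w"
    "det3 u (vf_comb f u g v k w) w = g * det3 u v w"
    "det3 u v (vf_comb f u g v k w) = k * det3 u v w"
  by (cases u; cases v; cases w; simp add: det3_def vf_comb_def algebra_simps)+

lemma free_basis3I:
  assumes "u \<in> M" "v \<in> M" "w \<in> M" "det3 u v w \<noteq> 0"
    and "\<And>\<delta>. \<delta> \<in> M \<Longrightarrow> \<exists>f g k. \<delta> = vf_comb f u g v k w"
  shows "free_basis3 M u v w"
proof -
  have unique: "(f, g, k) = (f', g', k')"
    if "vf_comb f u g v k w = vf_comb f' u g' v k' w" for f g k f' g' k'
    using det3_vf_comb[where f = f and g = g and k = k and u = u and v = v and w = w]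
      det3_vf_comb[where f = f' and g = g' and k = k' and u = u and v = v and w = w]
      that assms(4) by simp
  show ?thesis
    unfolding free_basis3_def
  proof (intro conjI ballI assms(1-3))
    fix \<delta>
    assume "\<delta> \<in> M"
    then obtain f g k where "\<delta> = vf_comb f u g v k w"
      using assms(5) by blast
    then show "\<exists>!(f, g, k). \<delta> = vf_comb f u g v k w"
      by (intro ex1I[of _ "(f, g, k)"]) (auto split: prod.splits dest: unique)
  qed
qed

lemma vf_apply_saito_fields:
  "vf_apply (X1, - X2, 0) (X1 * X2 * X3) = 0"
  "vf_apply (0, X2, - X3) (X1 * X2 * X3) = 0"
  "vf_apply (b1 * X1, b2 * X2, b3 * X3) (X1 * X2 * X3) = X1 * X2 * X3 * (b1 + b2 + b3)"
  unfolding vf_apply_X1_X2_X3 by (simp_all add: algebra_simps)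

lemma det3_saito_fields:
  "det3 (X1, - X2, 0) (0, X2, - X3) (b1 * X1, b2 * X2, b3 * X3) = X1 * X2 * X3 * (b1 + b2 + b3)"
  by (simp add: det3_def algebra_simps)

lemma X_not_dvd: "\<not> X1 dvd X2" "\<not> X1 dvd X3" "\<not> X2 dvd X1" "\<not> X2 dvd X3" "\<not> X3 dvd X1" "\<not> X3 dvd X2"
  unfolding X1_def X2_def X3_def
  by (simp_all add: pCons_0_1_dvd_const_poly_iff const_poly_dvd_pCons_0_1_iff is_unit_poly_iff)

lemma prime_elem_X: "prime_elem X1" "prime_elem X2" "prime_elem X3"
  unfolding X1_def X2_def X3_def prime_elem_const_poly_iff
  by (auto intro: prime_elem_linear_field_poly prime_elem_linear_poly)

lemma saito_fields_span:
  fixes c1 c2 c3 b1 b2 b3 :: A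
  assumes "X1 * X2 * X3 * (b1 + b2 + b3) dvd vf_apply (c1, c2, c3) (X1 * X2 * X3)"
  shows "\<exists>f g k. (c1, c2, c3) = vf_comb f (X1, - X2, 0) g (0, X2, - X3) k (b1 * X1, b2 * X2, b3 * X3)"
proof -
  let ?S = "c1 * X2 * X3 + c2 * X1 * X3 + c3 * X1 * X2"
  have S_dvd: "X1 * X2 * X3 * (b1 + b2 + b3) dvd ?S"
    using assms by (simp add: vf_apply_X1_X2_X3)
  have "X1 dvd c1 * X2 * X3"
    using dvd_trans[OF _ S_dvd, of X1] by (simp add: dvd_add_left_iff)
  then obtain e1 where e1: "c1 = X1 * e1"
    by (auto simp: prime_elem_dvd_mult_iff prime_elem_X X_not_dvd)
  have "X2 dvd c2 * X1 * X3"
    using dvd_trans[OF _ S_dvd, of X2] by (simp add: dvd_add_left_iff dvd_add_right_iff)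
  then obtain e2 where e2: "c2 = X2 * e2"
    by (auto simp: prime_elem_dvd_mult_iff prime_elem_X X_not_dvd)
  have "X3 dvd c3 * X1 * X2"
    using dvd_trans[OF _ S_dvd, of X3] by (simp add: dvd_add_right_iff)
  then obtain e3 where e3: "c3 = X3 * e3"
    by (auto simp: prime_elem_dvd_mult_iff prime_elem_X X_not_dvd)
  have "?S = X1 * X2 * X3 * (e1 + e2 + e3)"
    by (simp add: e1 e2 e3 algebra_simps)
  then have "b1 + b2 + b3 dvd e1 + e2 + e3"
    using S_dvd prime_elem_X by (simp add: prime_elem_def)
  then obtain w where w: "e1 + e2 + e3 = (b1 + b2 + b3) * w" ..
  \<comment> \<open>the first and third components force f and g; the second follows from w\<close>
  have "(c1, c2, c3) = vf_comb (e1 - w * b1) (X1, - X2, 0) (w * b3 - e3) (0, X2, - X3)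
                              w (b1 * X1, b2 * X2, b3 * X3)"
  proof -
    have "X2 * e2 = - ((e1 - w * b1) * X2) + (w * b3 - e3) * X2 + w * (b2 * X2)"
      using w by algebra
    then show ?thesis
      by (simp add: vf_comb_def e1 e2 e3 algebra_simps)
  qed
  then show ?thesis by blast
qed

theorem mainTheorem5:
  fixes n1 n2 n3 :: nat and \<alpha>1 \<alpha>2 \<alpha>3 :: complex
  assumes "n1 > 0" "n2 > 0" "n3 > 0"
  defines "P \<equiv> X1 * X2 * X3"
  defines "h \<equiv> cst \<alpha>1 * P ^ n1 + cst \<alpha>2 * P ^ n2 + cst \<alpha>3 * P ^ n3"
  assumes "squarefree h"
  defines "a1 \<equiv> cst \<alpha>1 * P ^ (n1 - 1)"
  defines "a2 \<equiv> cst \<alpha>2 * P ^ (n2 - 1)"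
  defines "a3 \<equiv> cst \<alpha>3 * P ^ (n3 - 1)"
  defines "\<delta>1 \<equiv> (X1, - X2, 0)"
  defines "\<delta>2 \<equiv> (0, X2, - X3)"
  defines "\<delta>3 \<equiv> (a1 * X1, a2 * X2, a3 * X3)"
  shows "h dvd vf_apply \<delta>1 h \<and> h dvd vf_apply \<delta>2 h \<and> h dvd vf_apply \<delta>3 h
         \<and> det3 \<delta>1 \<delta>2 \<delta>3 = h
         \<and> free_basis3 (logder h) \<delta>1 \<delta>2 \<delta>3"
proof -
  define H where "H = monom \<alpha>1 n1 + monom \<alpha>2 n2 + monom \<alpha>3 n3"
  have h_subst: "h = poly_subst P H"
    by (simp add: h_def H_def)
  have "degree P \<noteq> 0"
    by (simp add: P_def X1_def X2_def X3_def)
  then have "coprime h (poly_subst P (pderiv H))"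
    using \<open>squarefree h\<close> unfolding h_subst
    by (intro coprime_poly_subst coprime_pderiv_if_rsquarefree rsquarefree_if_squarefree_poly_subst)
  then have logder_iff: "\<delta> \<in> logder h \<longleftrightarrow> h dvd vf_apply \<delta> P" for \<delta>
    unfolding h_subst by (rule logder_poly_subst_iff)
  have h_factor: "h = P * (a1 + a2 + a3)"
    \<comment> \<open>n_i > 0 matters here: the exponents n_i - 1 use truncated subtraction\<close>
    using assms(1-3) by (simp add: h_def a1_def a2_def a3_def power_eq_if algebra_simps)
  have in_logder: "\<delta>1 \<in> logder h" "\<delta>2 \<in> logder h" "\<delta>3 \<in> logder h"
    unfolding logder_iff using vf_apply_saito_fields(1,2) vf_apply_saito_fields(3)[of a1 a2 a3]
    by (simp_all add: h_factor P_def \<delta>1_def \<delta>2_def \<delta>3_def)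
  have det: "det3 \<delta>1 \<delta>2 \<delta>3 = h"
    using det3_saito_fields[of a1 a2 a3] by (simp add: h_factor P_def \<delta>1_def \<delta>2_def \<delta>3_def)
  have "free_basis3 (logder h) \<delta>1 \<delta>2 \<delta>3"
  proof (rule free_basis3I[OF in_logder])
    show "det3 \<delta>1 \<delta>2 \<delta>3 \<noteq> 0"
      using det \<open>squarefree h\<close> by auto
    fix \<delta>
    assume "\<delta> \<in> logder h"
    then have "h dvd vf_apply \<delta> P"
      by (simp only: logder_iff)
    then show "\<exists>f g k. \<delta> = vf_comb f \<delta>1 g \<delta>2 k \<delta>3"
      using saito_fields_span[of a1 a2 a3] unfolding h_factor P_def \<delta>1_def \<delta>2_def \<delta>3_def
      by (cases \<delta>) simp
  qed
  with in_logder det show ?thesis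
    by (simp add: logder_def)
qed

end
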